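(* Let $f:\mathbb{R}^p\to\mathbb{R}$ be convex and differentiable with Lipschitz gradient, $g_j:\mathbb{R}\to\mathbb{R}\cup\{+\infty\}$ proper closed convex, $g(x)=\sum_jg_j(x_j)$, and let $x^\star$ be a minimizer of $f+g$ satisfying $-\nabla f(x^\star)\in\operatorname{ri}(\partial g(x^\star))$, with $f$ $\mathcal{C}^2$ near $x^\star$. Let $\gamma_j>0$. Then for all $j\in\mathcal{S}^c$, $\operatorname{prox}_{\gamma_jg_j}$ is constant on a neighbourhood of $x^\star_j-\gamma_j\nabla_jf(x^\star)$. Moreover, the map $x\mapsto\operatorname{prox}_{\gamma_jg_j}(x_j-\gamma_j\nabla_jf(x))$ is differentiable at $x^\star$ with gradient $0$.
   Context: $\mathcal{S}=\mathcal{S}_{x^\star}=\{j:\partial g_j(x^\star_j)\text{ is a singleton}\}$, $\mathcal{S}^c=[p]\setminus\mathcal{S}$. $\operatorname{ri}$ denotes relative interior. $\operatorname{prox}_{\gamma h}(v)=\arg\min_y\frac1{2\gamma}(v-y)^2+h(y)$. *)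

theory Defs
  imports "HOL-Analysis.Analysis"
begin

text \<open>Extended-real-valued functions \<open>h :: 'a \<Rightarrow> ereal\<close> model functions into
  \<open>\<real> \<union> {+\<infinity>}\<close>.\<close>

definition epigraph :: "('a \<Rightarrow> ereal) \<Rightarrow> ('a \<times> real) set" where
  "epigraph h = {(x, t). h x \<le> ereal t}"

definition proper_fun :: "('a \<Rightarrow> ereal) \<Rightarrow> bool" where
  "proper_fun h \<longleftrightarrow> (\<forall>x. h x \<noteq> -\<infinity>) \<and> (\<exists>x. h x \<noteq> \<infinity>)"

definition closed_convex_proper :: "('a::real_normed_vector \<Rightarrow> ereal) \<Rightarrow> bool" where
  "closed_convex_proper h \<longleftrightarrow> proper_fun h \<and> convex (epigraph h) \<and> closed (epigraph h)"

definition subdiff :: "('a::real_inner \<Rightarrow> ereal) \<Rightarrow> 'a \<Rightarrow> 'a set" where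
  "subdiff h x = {v. \<forall>y. h x + ereal (v \<bullet> (y - x)) \<le> h y}"

definition prox :: "real \<Rightarrow> (real \<Rightarrow> ereal) \<Rightarrow> real \<Rightarrow> real" where
  "prox \<gamma> h v = (THE y. \<forall>z. ereal ((v - y)^2 / (2 * \<gamma>)) + h y
                              \<le> ereal ((v - z)^2 / (2 * \<gamma>)) + h z)"

definition sep_sum :: "('n::finite \<Rightarrow> real \<Rightarrow> ereal) \<Rightarrow> real^'n \<Rightarrow> ereal" where
  "sep_sum g x = (\<Sum>j\<in>UNIV. g j (x $ j))"

end

theory Submission
  imports Defs
begin

text \<open>Write \<open>v = -\<nabla>f(x\<^sup>\<star>)\<close>. Since \<open>g\<close> is separable, \<open>\<partial>g(x\<^sup>\<star>)\<close> is the product of the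
  intervals \<open>\<partial>g\<^sub>j(x\<^sup>\<star>\<^sub>j)\<close>, so projecting its relative interior to the \<open>j\<close>-th coordinate gives
  the relative interior of \<open>\<partial>g\<^sub>j(x\<^sup>\<star>\<^sub>j)\<close>. When this interval is not a singleton its relative
  interior is its interior, which therefore contains \<open>v\<^sub>j\<close>.
  The optimality condition of the prox, \<open>(u - p)/\<gamma> \<in> \<partial>h(p) \<Longrightarrow> prox\<^sub>\<gamma>\<^sub>h(u) = p\<close>, then shows
  that \<open>prox\<^sub>\<gamma>\<^sub>g\<^sub>j\<close> equals \<open>x\<^sup>\<star>\<^sub>j\<close> on a neighbourhood of \<open>x\<^sup>\<star>\<^sub>j + \<gamma>\<^sub>j v\<^sub>j\<close>. By continuity of \<open>\<nabla>f\<close>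
  the composite map is locally constant at \<open>x\<^sup>\<star>\<close>, so its derivative vanishes.\<close>

lemma subdiff_convex: "convex (subdiff h x)"
  unfolding convex_def
proof (intro ballI allI impI)
  fix v w :: 'a and s t :: real
  assume v: "v \<in> subdiff h x" and w: "w \<in> subdiff h x" and "0 \<le> s" "0 \<le> t" "s + t = 1"
  show "s *\<^sub>R v + t *\<^sub>R w \<in> subdiff h x"
    unfolding subdiff_def
  proof (intro CollectI allI)
    fix y
    have "(s *\<^sub>R v + t *\<^sub>R w) \<bullet> (y - x) \<le> max (v \<bullet> (y - x)) (w \<bullet> (y - x))"
      using \<open>0 \<le> s\<close> \<open>0 \<le> t\<close> \<open>s + t = 1\<close> by (simp add: inner_add_left convex_bound_le)
    then have "h x + ereal ((s *\<^sub>R v + t *\<^sub>R w) \<bullet> (y - x))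
               \<le> h x + ereal (max (v \<bullet> (y - x)) (w \<bullet> (y - x)))"
      by (intro add_left_mono) (metis ereal_less_eq(3))
    also have "\<dots> \<le> h y"
      using v w unfolding subdiff_def by (auto simp: max_def)
    finally show "h x + ereal ((s *\<^sub>R v + t *\<^sub>R w) \<bullet> (y - x)) \<le> h y" .
  qed
qed

lemma subdiff_nonempty_imp_not_PInf:
  assumes "v \<in> subdiff h x" and "h y \<noteq> \<infinity>"
  shows "h x \<noteq> \<infinity>"
proof
  assume "h x = \<infinity>"
  moreover have "h x + ereal (v \<bullet> (y - x)) \<le> h y"
    using assms(1) unfolding subdiff_def by blast
  ultimately show False
    using assms(2) by simp
qed

lemma prox_eqI:
  fixes h :: "real \<Rightarrow> ereal"
  assumes fin: "\<bar>h p\<bar> \<noteq> \<infinity>" and "\<gamma> > 0" and sub: "(u - p) / \<gamma> \<in> subdiff h p"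
  shows "prox \<gamma> h u = p"
proof -
  define q where "q z = (u - z)\<^sup>2 / (2 * \<gamma>)" for z
  obtain a where a: "h p = ereal a"
    using fin by (cases "h p") auto
  have growth: "ereal (q p) + h p + ereal ((z - p)\<^sup>2 / (2 * \<gamma>)) \<le> ereal (q z) + h z" for z
  proof -
    have "ereal (q p) + h p + ereal ((z - p)\<^sup>2 / (2 * \<gamma>))
          = ereal (q z) + (h p + ereal ((u - p) / \<gamma> * (z - p)))"
      using \<open>\<gamma> > 0\<close> a by (simp add: q_def field_simps power2_eq_square)
    also have "\<dots> \<le> ereal (q z) + h z"
      using sub unfolding subdiff_def by (intro add_left_mono) (auto simp: inner_real_def)
    finally show ?thesis .
  qed
  show ?thesis
    unfolding prox_def q_def[symmetric]
  proof (rule the_equality)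
    show "\<forall>z. ereal (q p) + h p \<le> ereal (q z) + h z"
    proof
      fix z
      have "ereal (q p) + h p \<le> ereal (q p) + h p + ereal ((z - p)\<^sup>2 / (2 * \<gamma>))"
        using \<open>\<gamma> > 0\<close> a by simp
      also note growth[of z]
      finally show "ereal (q p) + h p \<le> ereal (q z) + h z" .
    qed
  next
    fix y
    assume "\<forall>z. ereal (q y) + h y \<le> ereal (q z) + h z"
    then have "ereal (q p) + h p + ereal ((y - p)\<^sup>2 / (2 * \<gamma>)) \<le> ereal (q p) + h p"
      using growth[of y] order_trans by blast
    then have "(y - p)\<^sup>2 / (2 * \<gamma>) \<le> 0"
      using a by simp
    then show "y = p"
      using \<open>\<gamma> > 0\<close> by (simp add: divide_le_0_iff)
  qed
qed

lemma prox_eventually_eq: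
  fixes h :: "real \<Rightarrow> ereal"
  assumes "\<bar>h p\<bar> \<noteq> \<infinity>" and "\<gamma> > 0" and s: "s \<in> interior (subdiff h p)"
  shows "\<forall>\<^sub>F u in nhds (p + \<gamma> * s). prox \<gamma> h u = p"
proof -
  have "((\<lambda>u. (u - p) / \<gamma>) \<longlongrightarrow> s) (nhds (p + \<gamma> * s))"
    using \<open>\<gamma> > 0\<close> by (auto intro!: tendsto_eq_intros filterlim_ident)
  then have "\<forall>\<^sub>F u in nhds (p + \<gamma> * s). (u - p) / \<gamma> \<in> interior (subdiff h p)"
    using s by (rule topological_tendstoD[OF _ open_interior])
  then show ?thesis
    by (rule eventually_mono) (metis assms(1,2) interior_subset prox_eqI subsetD)
qed

lemma rel_interior_eq_interior_real:
  fixes T :: "real set"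
  assumes "\<not> is_singleton T"
  shows "rel_interior T = interior T"
proof (cases "T = {}")
  case False
  then have "aff_dim T \<ge> 0"
    using aff_dim_negative_iff[of T] by linarith
  moreover have "aff_dim T \<noteq> 0"
    using assms aff_dim_eq_0[of T] by (auto simp: is_singleton_def)
  moreover have "aff_dim T \<le> 1"
    using aff_dim_le_DIM[of T] by simp
  ultimately have "aff_dim T = DIM(real)"
    by simp
  then show ?thesis
    by (intro rel_interior_interior) (simp only: aff_dim_eq_full)
qed simp

lemma sep_sum_remove:
  "sep_sum g x = g j (x $ j) + (\<Sum>k\<in>UNIV - {j}. g k (x $ k))"
  unfolding sep_sum_def by (rule sum.remove) auto

lemma nth_mem_subdiff_sep_sum:
  fixes g :: "'n::finite \<Rightarrow> real \<Rightarrow> ereal"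
  assumes fin: "\<And>k. \<bar>g k (x $ k)\<bar> \<noteq> \<infinity>" and w: "w \<in> subdiff (sep_sum g) x"
  shows "w $ j \<in> subdiff (g j) (x $ j)"
  unfolding subdiff_def
proof (intro CollectI allI)
  fix z
  define y where "y = x + axis j (z - x $ j)"
  define R where "R = (\<Sum>k\<in>UNIV - {j}. g k (x $ k))"
  have R_finite: "R = ereal (\<Sum>k\<in>UNIV - {j}. real_of_ereal (g k (x $ k)))"
    unfolding R_def sum_ereal[symmetric] using fin by (simp add: ereal_real')
  have "(\<Sum>k\<in>UNIV - {j}. g k (y $ k)) = R"
    unfolding R_def by (rule sum.cong) (auto simp: y_def axis_def)
  moreover have "y $ j = z"
    by (simp add: y_def)
  ultimately have "sep_sum g y = g j z + R"
    using sep_sum_remove[of g y j] by simp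
  moreover have "sep_sum g x + ereal (w \<bullet> (y - x)) \<le> sep_sum g y"
    using w unfolding subdiff_def by blast
  ultimately have "(g j (x $ j) + ereal (w $ j * (z - x $ j))) + R \<le> g j z + R"
    by (simp add: sep_sum_remove[of g x j] R_def[symmetric] y_def inner_axis ac_simps)
  then show "g j (x $ j) + ereal (w $ j \<bullet> (z - x $ j)) \<le> g j z"
    using R_finite by (simp add: ereal_add_le_add_iff2 inner_real_def)
qed

lemma mem_subdiff_sep_sumI:
  fixes g :: "'n::finite \<Rightarrow> real \<Rightarrow> ereal"
  assumes "\<And>k. w $ k \<in> subdiff (g k) (x $ k)"
  shows "w \<in> subdiff (sep_sum g) x"
  unfolding subdiff_def
proof (intro CollectI allI)
  fix y
  have "sep_sum g x + ereal (w \<bullet> (y - x)) = (\<Sum>k\<in>UNIV. g k (x $ k) + ereal (w $ k * (y $ k - x $ k)))"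
    by (simp add: sep_sum_def sum.distrib inner_vec_def)
  also have "\<dots> \<le> (\<Sum>k\<in>UNIV. g k (y $ k))"
    using assms unfolding subdiff_def inner_real_def by (intro sum_mono) blast
  finally show "sep_sum g x + ereal (w \<bullet> (y - x)) \<le> sep_sum g y"
    by (simp add: sep_sum_def)
qed

lemma nth_image_subdiff_sep_sum:
  fixes g :: "'n::finite \<Rightarrow> real \<Rightarrow> ereal"
  assumes fin: "\<And>k. \<bar>g k (x $ k)\<bar> \<noteq> \<infinity>" and v: "v \<in> subdiff (sep_sum g) x"
  shows "(\<lambda>w. w $ j) ` subdiff (sep_sum g) x = subdiff (g j) (x $ j)"
proof
  show "(\<lambda>w. w $ j) ` subdiff (sep_sum g) x \<subseteq> subdiff (g j) (x $ j)"
    using nth_mem_subdiff_sep_sum[of g x, OF fin] by blast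
  show "subdiff (g j) (x $ j) \<subseteq> (\<lambda>w. w $ j) ` subdiff (sep_sum g) x"
  proof
    fix t
    assume t: "t \<in> subdiff (g j) (x $ j)"
    define w where "w = (\<chi> k. if k = j then t else v $ k)"
    have "w \<in> subdiff (sep_sum g) x"
      using t nth_mem_subdiff_sep_sum[of g x, OF fin v] by (intro mem_subdiff_sep_sumI) (simp add: w_def)
    then show "t \<in> (\<lambda>w. w $ j) ` subdiff (sep_sum g) x"
      by (rule rev_image_eqI) (simp add: w_def)
  qed
qed

lemma nth_rel_interior_subdiff_sep_sum:
  fixes g :: "'n::finite \<Rightarrow> real \<Rightarrow> ereal"
  assumes fin: "\<And>k. \<bar>g k (x $ k)\<bar> \<noteq> \<infinity>"
    and v: "v \<in> rel_interior (subdiff (sep_sum g) x)"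
    and nonsingleton: "\<not> is_singleton (subdiff (g j) (x $ j))"
  shows "v $ j \<in> interior (subdiff (g j) (x $ j))"
proof -
  have vS: "v \<in> subdiff (sep_sum g) x"
    using v rel_interior_subset by blast
  have "v $ j \<in> (\<lambda>w. w $ j) ` rel_interior (subdiff (sep_sum g) x)"
    using v by blast
  also have "\<dots> = rel_interior ((\<lambda>w. w $ j) ` subdiff (sep_sum g) x)"
    using bounded_linear_vec_nth[THEN bounded_linear.linear] subdiff_convex
    by (rule rel_interior_convex_linear_image)
  also have "\<dots> = rel_interior (subdiff (g j) (x $ j))"
    by (simp only: nth_image_subdiff_sep_sum[of g x, OF fin vS])
  also have "\<dots> = interior (subdiff (g j) (x $ j))"
    using nonsingleton by (rule rel_interior_eq_interior_real)
  finally show ?thesis .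
qed

lemma subdiff_sep_sum_nonempty_imp_nth_finite:
  fixes g :: "'n::finite \<Rightarrow> real \<Rightarrow> ereal"
  assumes proper: "\<And>k. proper_fun (g k)" and v: "v \<in> subdiff (sep_sum g) x"
  shows "\<bar>g k (x $ k)\<bar> \<noteq> \<infinity>"
proof -
  have "\<exists>t. g k t \<noteq> \<infinity>" for k
    using proper[of k] unfolding proper_fun_def by blast
  then obtain y where "\<And>k. g k (y $ k) \<noteq> \<infinity>"
    by (metis vec_lambda_beta)
  then have "sep_sum g y \<noteq> \<infinity>"
    by (simp add: sep_sum_def sum_Pinfty)
  then have "sep_sum g x \<noteq> \<infinity>"
    by (rule subdiff_nonempty_imp_not_PInf[OF v])
  moreover have "g k (x $ k) \<noteq> -\<infinity>"
    using proper[of k] unfolding proper_fun_def by blast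
  ultimately show ?thesis
    by (auto simp: sep_sum_def sum_Pinfty)
qed

theorem lemma3:
  fixes f :: "real^'n \<Rightarrow> real"
    and grad :: "real^'n \<Rightarrow> real^'n"
    and g :: "'n \<Rightarrow> real \<Rightarrow> ereal"
    and xs :: "real^'n"
    and \<gamma> :: "'n \<Rightarrow> real"
  assumes f_convex: "convex_on UNIV f"
    and f_grad: "\<And>x. (f has_derivative (\<lambda>h. grad x \<bullet> h)) (at x)"
    and grad_lip: "\<exists>L. L-lipschitz_on UNIV grad"
    and g_ccp: "\<And>j. closed_convex_proper (g j)"
    and xs_min: "\<And>x. ereal (f xs) + sep_sum g xs \<le> ereal (f x) + sep_sum g x"
    and qualif: "- grad xs \<in> rel_interior (subdiff (sep_sum g) xs)"
    and f_C2: "\<exists>U H. open U \<and> xs \<in> U \<and>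
                 (\<forall>x\<in>U. (grad has_derivative blinfun_apply (H x)) (at x)) \<and>
                 continuous_on U (H :: real^'n \<Rightarrow> ((real^'n) \<Rightarrow>\<^sub>L (real^'n)))"
    and gamma_pos: "\<And>j. \<gamma> j > 0"
  shows "\<forall>j. \<not> is_singleton (subdiff (g j) (xs $ j)) \<longrightarrow>
           (\<exists>e>0. \<exists>c. \<forall>u. \<bar>u - (xs $ j - \<gamma> j * grad xs $ j)\<bar> < e \<longrightarrow>
                                prox (\<gamma> j) (g j) u = c)
           \<and> ((\<lambda>x. prox (\<gamma> j) (g j) (x $ j - \<gamma> j * grad x $ j)) has_derivative (\<lambda>h. 0)) (at xs)"
proof (intro allI impI)
  fix j
  assume nonsingleton: "\<not> is_singleton (subdiff (g j) (xs $ j))"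
  define z where "z x = x $ j - \<gamma> j * grad x $ j" for x
  have "- grad xs \<in> subdiff (sep_sum g) xs"
    using qualif rel_interior_subset by blast
  moreover have "proper_fun (g k)" for k
    using g_ccp unfolding closed_convex_proper_def by blast
  ultimately have fin: "\<bar>g k (xs $ k)\<bar> \<noteq> \<infinity>" for k
    by (intro subdiff_sep_sum_nonempty_imp_nth_finite)
  have "(- grad xs) $ j \<in> interior (subdiff (g j) (xs $ j))"
    using fin qualif nonsingleton by (rule nth_rel_interior_subdiff_sep_sum)
  from prox_eventually_eq[OF _ _ this, OF fin gamma_pos]
  have near_z: "\<forall>\<^sub>F u in nhds (z xs). prox (\<gamma> j) (g j) u = xs $ j"
    by (simp add: z_def)
  have "isCont z xs"
    using grad_lip unfolding z_def
    by (auto intro!: continuous_intros dest!: lipschitz_on_continuous_on simp: continuous_on_eq_continuous_at)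
  then have near_xs: "\<forall>\<^sub>F x in at xs. prox (\<gamma> j) (g j) (z x) = xs $ j"
    unfolding isCont_def by (rule eventually_compose_filterlim[OF near_z])
  have "((\<lambda>x. prox (\<gamma> j) (g j) (z x)) has_derivative (\<lambda>h. 0)) (at xs)"
  proof (rule has_derivative_transform_eventually[OF has_derivative_const])
    show "\<forall>\<^sub>F x in at xs. xs $ j = prox (\<gamma> j) (g j) (z x)"
      using near_xs by (rule eventually_mono) simp
    show "xs $ j = prox (\<gamma> j) (g j) (z xs)"
      using eventually_nhds_x_imp_x[OF near_z] by simp
  qed simp
  moreover have "\<exists>e>0. \<forall>u. \<bar>u - z xs\<bar> < e \<longrightarrow> prox (\<gamma> j) (g j) u = xs $ j"
    using near_z by (auto simp: eventually_nhds_metric dist_real_def)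
  ultimately show "(\<exists>e>0. \<exists>c. \<forall>u. \<bar>u - z xs\<bar> < e \<longrightarrow> prox (\<gamma> j) (g j) u = c)
      \<and> ((\<lambda>x. prox (\<gamma> j) (g j) (z x)) has_derivative (\<lambda>h. 0)) (at xs)"
    by blast
qed

end
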